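(* Let $n\ge 1$ and let $\theta_1,\theta_2,\theta_3,\kappa_0,\kappa_1,\ldots,\kappa_n,\rho_1,\ldots,\rho_n$ be complex parameters. Let $q_j,p_j,q'_j,p'_j$ ($j=1,\ldots,n$) be (locally holomorphic) functions of $(t_1,t_2)$ solving the Schlesinger–Tsuda system $\mathcal{H}_{n+1,2}$ \[ \frac{\partial q_j}{\partial t_i}=\frac{\partial H_i}{\partial p_j},\quad \frac{\partial p_j}{\partial t_i}=-\frac{\partial H_i}{\partial q_j},\quad \frac{\partial q'_j}{\partial t_i}=\frac{\partial H_i}{\partial p'_j},\quad \frac{\partial p'_j}{\partial t_i}=-\frac{\partial H_i}{\partial q'_j}\qquad(i=1,2;\ j=1,\ldots,n), \] with Hamiltonians $H_1,H_2$ as described in the context. Assume moreover that \[ q_ip_i-\kappa_i-\rho_i=0,\qquad p'_i=0\qquad(i=1,\ldots,n),\qquad \theta_1+\sum_{j=1}^n(\kappa_j+\rho_j)=0 . \] Let $w_0$ be a nonzero function satisfying \[ d\log w_0=\Big(\sum_{j=1}^np_j+\theta_3\Big)d\log(t_1-1)+\Big\{\sum_{j=1}^n(q'_j-1)p_j+\kappa_0+\rho_1\Big\}d\log t_1+\Big(-\sum_{j=1}^nq'_jp_j+\theta_2\Big)d\log(t_1-t_2), \] where $d$ is the exterior derivative in $(t_1,t_2)$, and put $w_i=p_iw_0$, $w'_i=-q'_ip_iw_0$ ($i=1,\ldots,n$). Then the vector $\mathbf{w}={}^t[w_0,w_1,\ldots,w_n,w'_1,\ldots,w'_n]$ satisfies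 the linear Pfaff system \[ d\mathbf{w}=\{A_1^{(1)}d\log(t_1-1)+A_0^{(1)}d\log t_1+A_td\log(t_1-t_2)+A_1^{(2)}d\log(t_2-1)+A_0^{(2)}d\log t_2\}\mathbf{w}, \] where, indexing rows and columns by $0,1,\ldots,2n$ (index $i\in\{1,\dots,n\}$ corresponding to $w_i$ and index $n+i$ to $w'_i$) and letting $E_{i,j}$ denote the $(2n+1)\times(2n+1)$ matrix with $1$ in entry $(i,j)$ and $0$ elsewhere, \begin{align*} A_1^{(1)}&=\theta_3E_{0,0}+\sum_{j=1}^nE_{0,j}+\sum_{i=1}^n\Big\{\theta_3(\kappa_i+\rho_i)E_{i,0}+\sum_{j=1}^n(\kappa_i+\rho_i)E_{i,j}\Big\},\\ A_0^{(1)}&=(\kappa_0+\rho_1)E_{0,0}-\sum_{j=1}^nE_{0,j}-\sum_{j=1}^nE_{0,n+j}+\sum_{i=1}^n\Big\{(\rho_1-\rho_i)E_{i,i}-\sum_{j=i+1}^n(\kappa_i+\rho_i)E_{i,j}\Big\}\\ &\quad+\sum_{i=1}^n\Big\{(\rho_1-\rho_i)E_{n+i,n+i}-\sum_{j=i+1}^n(\kappa_i+\rho_i)E_{n+i,n+j}\Big\},\\ A_t&=\theta_2E_{0,0}+\sum_{j=1}^nE_{0,n+j}+\sum_{i=1}^n\Big\{\theta_2(\kappa_i+\rho_i)E_{n+i,0}+\sum_{j=1}^n(\kappa_i+\rho_i)E_{n+i,n+j}\Big\},\\ A_1^{(2)}&=\sum_{i=1}^n\{\theta_2E_{i,i}-\theta_3E_{i,n+i}\}+\sum_{i=1}^n\{-\theta_2E_{n+i,i}+\theta_3E_{n+i,n+i}\},\\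 A_0^{(2)}&=\sum_{i=1}^n\Big\{-\theta_2(\kappa_i+\rho_i)E_{n+i,0}+\theta_2E_{n+i,i}-\sum_{j=1}^{i-1}(\kappa_i+\rho_i)E_{n+i,n+j}+(\theta_2+\kappa_0-\kappa_i)E_{n+i,n+i}\Big\}. \end{align*}
   Context: The Hamiltonian $H_1$ is \[ H_1=\frac{H_1^{(t)}}{t_1-t_2}+\frac{H_1^{(1)}}{t_1-1}+\frac{H_1^{(0)}}{t_1}, \] where \begin{align*} H_1^{(t)}&=\Big\{\sum_{i=1}^nq_i(p_i-p'_i)+\theta_1\Big\}\Big\{\sum_{i=1}^nq'_i(p'_i-p_i)+\theta_2\Big\},\\ H_1^{(1)}&=\Big[\sum_{i=1}^n\{(q_i-1)p_i+q'_ip'_i-\kappa_i-\rho_i\}-\theta_3\Big]\Big[\sum_{i=1}^nq_i\{(q_i-1)p_i+q'_ip'_i-\kappa_i-\rho_i\}-\theta_1\Big],\\ H_1^{(0)}&=\Big(\sum_{i=1}^nq_ip_i+\theta_1\Big)\Big\{\sum_{i=1}^n(q_i+q'_i-1)p_i+\kappa_0\Big\}-\sum_{i=1}^n\kappa_iq_ip_i\\ &\quad+\sum_{i=1}^n\sum_{j=i+1}^nq_ip_j\{(q_i-q_j)p_i+(q'_i-q'_j)p'_i-\kappa_i-\rho_i\}. \end{align*} The Hamiltonian $H_2$ is obtained from $H_1$ by the simultaneous replacement $t_1\leftrightarrow t_2$, $p_i\leftrightarrow p'_i$, $q_i\leftrightarrow q'_i$ ($i=1,\dots,n$), $\theta_1\leftrightarrow\theta_2$.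 *)

theory Defs
  imports "HOL-Analysis.Analysis"
begin

text \<open>Dependent variables are functions nat => complex indexed by 1..n:
  q, p, q' (written qq), p' (written pp).\<close>

definition H1t :: "nat \<Rightarrow> complex \<Rightarrow> complex \<Rightarrow> (nat \<Rightarrow> complex) \<Rightarrow> (nat \<Rightarrow> complex)
    \<Rightarrow> (nat \<Rightarrow> complex) \<Rightarrow> (nat \<Rightarrow> complex) \<Rightarrow> complex" where
  "H1t n th1 th2 q p qq pp =
     ((\<Sum>i=1..n. q i * (p i - pp i)) + th1) * ((\<Sum>i=1..n. qq i * (pp i - p i)) + th2)"

definition H11 :: "nat \<Rightarrow> complex \<Rightarrow> complex \<Rightarrow> (nat \<Rightarrow> complex) \<Rightarrow> (nat \<Rightarrow> complex)
    \<Rightarrow> (nat \<Rightarrow> complex) \<Rightarrow> (nat \<Rightarrow> complex) \<Rightarrow> (nat \<Rightarrow> complex) \<Rightarrow> (nat \<Rightarrow> complex) \<Rightarrow> complex" where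
  "H11 n th1 th3 ka rh q p qq pp =
     ((\<Sum>i=1..n. (q i - 1) * p i + qq i * pp i - ka i - rh i) - th3) *
     ((\<Sum>i=1..n. q i * ((q i - 1) * p i + qq i * pp i - ka i - rh i)) - th1)"

definition H10 :: "nat \<Rightarrow> complex \<Rightarrow> (nat \<Rightarrow> complex) \<Rightarrow> (nat \<Rightarrow> complex)
    \<Rightarrow> (nat \<Rightarrow> complex) \<Rightarrow> (nat \<Rightarrow> complex) \<Rightarrow> (nat \<Rightarrow> complex) \<Rightarrow> (nat \<Rightarrow> complex) \<Rightarrow> complex" where
  "H10 n th1 ka rh q p qq pp =
     ((\<Sum>i=1..n. q i * p i) + th1) * ((\<Sum>i=1..n. (q i + qq i - 1) * p i) + ka 0)
     - (\<Sum>i=1..n. ka i * q i * p i)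
     + (\<Sum>i=1..n. \<Sum>j=i+1..n. q i * p j *
          ((q i - q j) * p i + (qq i - qq j) * pp i - ka i - rh i))"

definition H1 :: "nat \<Rightarrow> complex \<Rightarrow> complex \<Rightarrow> complex \<Rightarrow> (nat \<Rightarrow> complex) \<Rightarrow> (nat \<Rightarrow> complex)
    \<Rightarrow> complex \<Rightarrow> complex
    \<Rightarrow> (nat \<Rightarrow> complex) \<Rightarrow> (nat \<Rightarrow> complex) \<Rightarrow> (nat \<Rightarrow> complex) \<Rightarrow> (nat \<Rightarrow> complex) \<Rightarrow> complex" where
  "H1 n th1 th2 th3 ka rh t1 t2 q p qq pp =
     H1t n th1 th2 q p qq pp / (t1 - t2)
     + H11 n th1 th3 ka rh q p qq pp / (t1 - 1)
     + H10 n th1 ka rh q p qq pp / t1"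

definition H2 :: "nat \<Rightarrow> complex \<Rightarrow> complex \<Rightarrow> complex \<Rightarrow> (nat \<Rightarrow> complex) \<Rightarrow> (nat \<Rightarrow> complex)
    \<Rightarrow> complex \<Rightarrow> complex
    \<Rightarrow> (nat \<Rightarrow> complex) \<Rightarrow> (nat \<Rightarrow> complex) \<Rightarrow> (nat \<Rightarrow> complex) \<Rightarrow> (nat \<Rightarrow> complex) \<Rightarrow> complex" where
  "H2 n th1 th2 th3 ka rh t1 t2 q p qq pp = H1 n th2 th1 th3 ka rh t2 t1 qq pp q p"

definition Ham :: "nat \<Rightarrow> nat \<Rightarrow> complex \<Rightarrow> complex \<Rightarrow> complex \<Rightarrow> (nat \<Rightarrow> complex) \<Rightarrow> (nat \<Rightarrow> complex)
    \<Rightarrow> complex \<Rightarrow> complex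
    \<Rightarrow> (nat \<Rightarrow> complex) \<Rightarrow> (nat \<Rightarrow> complex) \<Rightarrow> (nat \<Rightarrow> complex) \<Rightarrow> (nat \<Rightarrow> complex) \<Rightarrow> complex" where
  "Ham i = (if i = 1 then H1 else H2)"

type_synonym ham = "(nat \<Rightarrow> complex) \<Rightarrow> (nat \<Rightarrow> complex) \<Rightarrow> (nat \<Rightarrow> complex) \<Rightarrow> (nat \<Rightarrow> complex) \<Rightarrow> complex"

definition dH_dq :: "ham \<Rightarrow> nat \<Rightarrow> (nat \<Rightarrow> complex) \<Rightarrow> (nat \<Rightarrow> complex) \<Rightarrow> (nat \<Rightarrow> complex) \<Rightarrow> (nat \<Rightarrow> complex) \<Rightarrow> complex" where
  "dH_dq H j q p qq pp = deriv (\<lambda>x. H (q(j := x)) p qq pp) (q j)"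
definition dH_dp :: "ham \<Rightarrow> nat \<Rightarrow> (nat \<Rightarrow> complex) \<Rightarrow> (nat \<Rightarrow> complex) \<Rightarrow> (nat \<Rightarrow> complex) \<Rightarrow> (nat \<Rightarrow> complex) \<Rightarrow> complex" where
  "dH_dp H j q p qq pp = deriv (\<lambda>x. H q (p(j := x)) qq pp) (p j)"
definition dH_dqq :: "ham \<Rightarrow> nat \<Rightarrow> (nat \<Rightarrow> complex) \<Rightarrow> (nat \<Rightarrow> complex) \<Rightarrow> (nat \<Rightarrow> complex) \<Rightarrow> (nat \<Rightarrow> complex) \<Rightarrow> complex" where
  "dH_dqq H j q p qq pp = deriv (\<lambda>x. H q p (qq(j := x)) pp) (qq j)"
definition dH_dpp :: "ham \<Rightarrow> nat \<Rightarrow> (nat \<Rightarrow> complex) \<Rightarrow> (nat \<Rightarrow> complex) \<Rightarrow> (nat \<Rightarrow> complex) \<Rightarrow> (nat \<Rightarrow> complex) \<Rightarrow> complex" where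
  "dH_dpp H j q p qq pp = deriv (\<lambda>x. H q p qq (pp(j := x))) (pp j)"

definition has_pderiv :: "(complex \<times> complex \<Rightarrow> complex) \<Rightarrow> nat \<Rightarrow> complex \<Rightarrow> complex \<times> complex \<Rightarrow> bool" where
  "has_pderiv f i D z =
     (if i = 1 then ((\<lambda>s. f (s, snd z)) has_field_derivative D) (at (fst z))
      else ((\<lambda>s. f (fst z, s)) has_field_derivative D) (at (snd z)))"

definition E :: "nat \<Rightarrow> nat \<Rightarrow> nat \<Rightarrow> nat \<Rightarrow> complex" where
  "E i j a b = (if a = i \<and> b = j then 1 else 0)"

definition A11 :: "nat \<Rightarrow> complex \<Rightarrow> (nat \<Rightarrow> complex) \<Rightarrow> (nat \<Rightarrow> complex) \<Rightarrow> nat \<Rightarrow> nat \<Rightarrow> complex" where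
  "A11 n th3 ka rh = (\<lambda>a b. th3 * E 0 0 a b + (\<Sum>j=1..n. E 0 j a b)
     + (\<Sum>i=1..n. th3 * (ka i + rh i) * E i 0 a b + (\<Sum>j=1..n. (ka i + rh i) * E i j a b)))"

definition A01 :: "nat \<Rightarrow> (nat \<Rightarrow> complex) \<Rightarrow> (nat \<Rightarrow> complex) \<Rightarrow> nat \<Rightarrow> nat \<Rightarrow> complex" where
  "A01 n ka rh = (\<lambda>a b. (ka 0 + rh 1) * E 0 0 a b - (\<Sum>j=1..n. E 0 j a b) - (\<Sum>j=1..n. E 0 (n+j) a b)
     + (\<Sum>i=1..n. (rh 1 - rh i) * E i i a b - (\<Sum>j=i+1..n. (ka i + rh i) * E i j a b))
     + (\<Sum>i=1..n. (rh 1 - rh i) * E (n+i) (n+i) a b - (\<Sum>j=i+1..n. (ka i + rh i) * E (n+i) (n+j) a b)))"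

definition At :: "nat \<Rightarrow> complex \<Rightarrow> (nat \<Rightarrow> complex) \<Rightarrow> (nat \<Rightarrow> complex) \<Rightarrow> nat \<Rightarrow> nat \<Rightarrow> complex" where
  "At n th2 ka rh = (\<lambda>a b. th2 * E 0 0 a b + (\<Sum>j=1..n. E 0 (n+j) a b)
     + (\<Sum>i=1..n. th2 * (ka i + rh i) * E (n+i) 0 a b + (\<Sum>j=1..n. (ka i + rh i) * E (n+i) (n+j) a b)))"

definition A12 :: "nat \<Rightarrow> complex \<Rightarrow> complex \<Rightarrow> nat \<Rightarrow> nat \<Rightarrow> complex" where
  "A12 n th2 th3 = (\<lambda>a b. (\<Sum>i=1..n. th2 * E i i a b - th3 * E i (n+i) a b)
     + (\<Sum>i=1..n. - th2 * E (n+i) i a b + th3 * E (n+i) (n+i) a b))"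

definition A02 :: "nat \<Rightarrow> complex \<Rightarrow> (nat \<Rightarrow> complex) \<Rightarrow> (nat \<Rightarrow> complex) \<Rightarrow> nat \<Rightarrow> nat \<Rightarrow> complex" where
  "A02 n th2 ka rh = (\<lambda>a b. (\<Sum>i=1..n. - th2 * (ka i + rh i) * E (n+i) 0 a b + th2 * E (n+i) i a b
     - (\<Sum>j=1..i-1. (ka i + rh i) * E (n+i) (n+j) a b) + (th2 + ka 0 - ka i) * E (n+i) (n+i) a b))"

end

theory Submission
  imports Defs
begin

(* Everything is pointwise and algebraic. On the locus p'_i = 0, q_i p_i = kappa_i + rho_i,
   theta_1 = - sum_j (kappa_j + rho_j), the factor sum_i q_i (p_i - p'_i) + theta_1 of H_1^(t), the
   factor sum_i q_i p_i + theta_1 of H_1^(0) and the second factor of H_1^(1) vanish, while in H_2 the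
   sums containing p'_i reduce to constants. The partial derivatives of H_1, H_2 that drive p_j and q'_j
   thus collapse to short polynomials in p_j, q'_j p_j and the parameters. Each row of the Pfaff system
   for w_j = p_j w_0 and w'_j = - q'_j p_j w_0 then follows from the product rule, the logarithmic
   derivative of w_0 cancelling every term that is not a matrix entry times a component of w.
   All identities are linear relations among quotients with common denominators. *)

lemma has_field_derivative_fun_upd_component:
  "((\<lambda>x. (f(j := x)) i) has_field_derivative (if i = j then 1 else 0)) (at y within S)"
  by (cases "i = j") (auto intro!: derivative_eq_intros)

lemma has_pderiv_cong: "has_pderiv f i D z \<Longrightarrow> D = D' \<Longrightarrow> has_pderiv f i D' z"
  by simp

lemma has_pderiv_mult:
  assumes "has_pderiv f i Df z" and "has_pderiv g i Dg z"
  shows "has_pderiv (\<lambda>z. f z * g z) i (Df * g z + f z * Dg) z"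
  using assms unfolding has_pderiv_def
  by (auto intro!: derivative_eq_intros simp: algebra_simps)

lemma has_pderiv_minus: "has_pderiv f i D z \<Longrightarrow> has_pderiv (\<lambda>z. - f z) i (- D) z"
  unfolding has_pderiv_def by (auto intro: DERIV_minus)

lemma if_zero_simps:
  "(if b then 1 else 0) * (a::complex) = (if b then a else 0)"
  "a * (if b then 1 else 0) = (if b then a else 0)"
  "(if b then x else 0) * a = (if b then x * a else 0)"
  "a * (if b then x else 0) = (if b then a * x else 0)"
  "- (if b then x else 0) = (if b then - x else 0)"
  "(if b then x else 0) + (if b then y else 0) = (if b then x + y else 0)"
  "(if b then x else 0) - (if b then y else 0) = (if b then x - y else 0)"
  by auto

lemma if_conj_zero: "(if a \<and> b then x else (0::complex)) = (if a then if b then x else 0 else 0)"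
  by auto

lemma sum_if_const: "(\<Sum>k\<in>A. if c then f k else 0) = (if c then sum f A else 0)"
  by auto

(* The shape in which the strictly triangular double sum of H10 comes out of differentiation. *)
lemma sum_if_Suc_le:
  "j \<le> n \<Longrightarrow> (\<Sum>i=Suc 0..n. if Suc i \<le> j then f i else 0) = (\<Sum>i=1..j-1. (f i::complex))"
  by (rule sum.mono_neutral_cong_right) auto

lemma sum_split_at:
  assumes "j \<in> {1..(n::nat)}"
  shows "(\<Sum>i=1..n. f i) = (\<Sum>i=1..j-1. f i) + f j + (\<Sum>i=j+1..n. f i :: 'a::comm_monoid_add)"
proof -
  have "{1..n} = ({1..j-1} \<union> {j}) \<union> {j+1..n}"
    using assms by (auto simp: le_diff_conv2)
  also have "sum f \<dots> = sum f ({1..j-1} \<union> {j}) + sum f {j+1..n}"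
    by (rule sum.union_disjoint) auto
  also have "sum f ({1..j-1} \<union> {j}) = sum f {1..j-1} + f j"
    by (subst sum.union_disjoint) auto
  finally show ?thesis .
qed

section \<open>Partial derivatives of the parts of the Hamiltonian\<close>

lemmas coordinate_derivative_simps =
  fun_upd_triv mult_zero_left mult_zero_right add_0_right add_0_left diff_0_right diff_0
  ring_distribs if_zero_simps

lemma has_field_derivative_H1t_q:
  "j \<in> {1..n} \<Longrightarrow>
    ((\<lambda>x. H1t n th1 th2 (Q(j:=x)) P QQ PP) has_field_derivative
      (P j - PP j) * ((\<Sum>i=1..n. QQ i * (PP i - P i)) + th2)) (at (Q j))"
  unfolding H1t_def
  by (rule derivative_eq_intros has_field_derivative_fun_upd_component refl | assumption)+
    (simp only: coordinate_derivative_simps,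
     simp add: sum.distrib sum_subtractf sum_if_const sum_if_Suc_le cong: if_cong,
     (simp add: algebra_simps sum.distrib sum_subtractf sum_negf sum_distrib_left)?)

lemma has_field_derivative_H11_q:
  "j \<in> {1..n} \<Longrightarrow>
    ((\<lambda>x. H11 n th1 th3 ka rh (Q(j:=x)) P QQ PP) has_field_derivative
      P j * ((\<Sum>i=1..n. Q i * ((Q i - 1) * P i + QQ i * PP i - ka i - rh i)) - th1)
      + ((\<Sum>i=1..n. (Q i - 1) * P i + QQ i * PP i - ka i - rh i) - th3) *
      ((Q j - 1) * P j + QQ j * PP j - ka j - rh j + Q j * P j)) (at (Q j))"
  unfolding H11_def
  by (rule derivative_eq_intros has_field_derivative_fun_upd_component refl | assumption)+
    (simp only: coordinate_derivative_simps,
     simp add: sum.distrib sum_subtractf sum_if_const sum_if_Suc_le cong: if_cong,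
     (simp add: algebra_simps sum.distrib sum_subtractf sum_negf sum_distrib_left)?)

lemma has_field_derivative_H10_q:
  "j \<in> {1..n} \<Longrightarrow>
    ((\<lambda>x. H10 n th1 ka rh (Q(j:=x)) P QQ PP) has_field_derivative
      P j * ((\<Sum>i=1..n. (Q i + QQ i - 1) * P i) + ka 0) + P j * ((\<Sum>i=1..n. Q i * P i) + th1) - ka j * P j
      + (\<Sum>k=j+1..n. P k * ((Q j - Q k) * P j + (QQ j - QQ k) * PP j - ka j - rh j) + Q j * P k * P j)
      - (\<Sum>i=1..j-1. Q i * P i * P j)) (at (Q j))"
  unfolding H10_def
  by (rule derivative_eq_intros has_field_derivative_fun_upd_component refl | assumption)+
    (simp only: coordinate_derivative_simps,
     simp add: sum.distrib sum_subtractf sum_if_const sum_if_Suc_le cong: if_cong,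
     (simp add: algebra_simps sum.distrib sum_subtractf sum_negf sum_distrib_left)?)

lemma has_field_derivative_H1t_p:
  "j \<in> {1..n} \<Longrightarrow>
    ((\<lambda>x. H1t n th1 th2 Q (P(j:=x)) QQ PP) has_field_derivative
      Q j * ((\<Sum>i=1..n. QQ i * (PP i - P i)) + th2) - QQ j * ((\<Sum>i=1..n. Q i * (P i - PP i)) + th1)) (at (P j))"
  unfolding H1t_def
  by (rule derivative_eq_intros has_field_derivative_fun_upd_component refl | assumption)+
    (simp only: coordinate_derivative_simps,
     simp add: sum.distrib sum_subtractf sum_if_const sum_if_Suc_le cong: if_cong,
     (simp add: algebra_simps sum.distrib sum_subtractf sum_negf sum_distrib_left)?)

lemma has_field_derivative_H11_p:
  "j \<in> {1..n} \<Longrightarrow>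
    ((\<lambda>x. H11 n th1 th3 ka rh Q (P(j:=x)) QQ PP) has_field_derivative
      (Q j - 1) * ((\<Sum>i=1..n. Q i * ((Q i - 1) * P i + QQ i * PP i - ka i - rh i)) - th1)
      + ((\<Sum>i=1..n. (Q i - 1) * P i + QQ i * PP i - ka i - rh i) - th3) * (Q j * (Q j - 1))) (at (P j))"
  unfolding H11_def
  by (rule derivative_eq_intros has_field_derivative_fun_upd_component refl | assumption)+
    (simp only: coordinate_derivative_simps,
     simp add: sum.distrib sum_subtractf sum_if_const sum_if_Suc_le cong: if_cong,
     (simp add: algebra_simps sum.distrib sum_subtractf sum_negf sum_distrib_left)?)

lemma has_field_derivative_H10_p:
  "j \<in> {1..n} \<Longrightarrow>
    ((\<lambda>x. H10 n th1 ka rh Q (P(j:=x)) QQ PP) has_field_derivative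
      Q j * ((\<Sum>i=1..n. (Q i + QQ i - 1) * P i) + ka 0) + (Q j + QQ j - 1) * ((\<Sum>i=1..n. Q i * P i) + th1) - ka j * Q j
      + (\<Sum>i=1..j-1. Q i * ((Q i - Q j) * P i + (QQ i - QQ j) * PP i - ka i - rh i))
      + (\<Sum>k=j+1..n. Q j * P k * (Q j - Q k))) (at (P j))"
  unfolding H10_def
  by (rule derivative_eq_intros has_field_derivative_fun_upd_component refl | assumption)+
    (simp only: coordinate_derivative_simps,
     simp add: sum.distrib sum_subtractf sum_if_const sum_if_Suc_le cong: if_cong,
     (simp add: algebra_simps sum.distrib sum_subtractf sum_negf sum_distrib_left)?)

lemma has_field_derivative_H1t_qq:
  "j \<in> {1..n} \<Longrightarrow>
    ((\<lambda>x. H1t n th1 th2 Q P (QQ(j:=x)) PP) has_field_derivative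
      ((\<Sum>i=1..n. Q i * (P i - PP i)) + th1) * (PP j - P j)) (at (QQ j))"
  unfolding H1t_def
  by (rule derivative_eq_intros has_field_derivative_fun_upd_component refl | assumption)+
    (simp only: coordinate_derivative_simps,
     simp add: sum.distrib sum_subtractf sum_if_const sum_if_Suc_le cong: if_cong,
     (simp add: algebra_simps sum.distrib sum_subtractf sum_negf sum_distrib_left)?)

lemma has_field_derivative_H11_qq:
  "j \<in> {1..n} \<Longrightarrow>
    ((\<lambda>x. H11 n th1 th3 ka rh Q P (QQ(j:=x)) PP) has_field_derivative
      PP j * ((\<Sum>i=1..n. Q i * ((Q i - 1) * P i + QQ i * PP i - ka i - rh i)) - th1)
      + ((\<Sum>i=1..n. (Q i - 1) * P i + QQ i * PP i - ka i - rh i) - th3) * (Q j * PP j)) (at (QQ j))"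
  unfolding H11_def
  by (rule derivative_eq_intros has_field_derivative_fun_upd_component refl | assumption)+
    (simp only: coordinate_derivative_simps,
     simp add: sum.distrib sum_subtractf sum_if_const sum_if_Suc_le cong: if_cong,
     (simp add: algebra_simps sum.distrib sum_subtractf sum_negf sum_distrib_left)?)

lemma has_field_derivative_H10_qq:
  "j \<in> {1..n} \<Longrightarrow>
    ((\<lambda>x. H10 n th1 ka rh Q P (QQ(j:=x)) PP) has_field_derivative
      ((\<Sum>i=1..n. Q i * P i) + th1) * P j
      + (\<Sum>k=j+1..n. Q j * P k * PP j) - (\<Sum>i=1..j-1. Q i * P j * PP i)) (at (QQ j))"
  unfolding H10_def
  by (rule derivative_eq_intros has_field_derivative_fun_upd_component refl | assumption)+
    (simp only: coordinate_derivative_simps,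
     simp add: sum.distrib sum_subtractf sum_if_const sum_if_Suc_le cong: if_cong,
     (simp add: algebra_simps sum.distrib sum_subtractf sum_negf sum_distrib_left)?)

lemma has_field_derivative_H1t_pp:
  "j \<in> {1..n} \<Longrightarrow>
    ((\<lambda>x. H1t n th1 th2 Q P QQ (PP(j:=x))) has_field_derivative
      - Q j * ((\<Sum>i=1..n. QQ i * (PP i - P i)) + th2) + QQ j * ((\<Sum>i=1..n. Q i * (P i - PP i)) + th1)) (at (PP j))"
  unfolding H1t_def
  by (rule derivative_eq_intros has_field_derivative_fun_upd_component refl | assumption)+
    (simp only: coordinate_derivative_simps,
     simp add: sum.distrib sum_subtractf sum_if_const sum_if_Suc_le cong: if_cong,
     (simp add: algebra_simps sum.distrib sum_subtractf sum_negf sum_distrib_left)?)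

lemma has_field_derivative_H11_pp:
  "j \<in> {1..n} \<Longrightarrow>
    ((\<lambda>x. H11 n th1 th3 ka rh Q P QQ (PP(j:=x))) has_field_derivative
      QQ j * ((\<Sum>i=1..n. Q i * ((Q i - 1) * P i + QQ i * PP i - ka i - rh i)) - th1)
      + ((\<Sum>i=1..n. (Q i - 1) * P i + QQ i * PP i - ka i - rh i) - th3) * (Q j * QQ j)) (at (PP j))"
  unfolding H11_def
  by (rule derivative_eq_intros has_field_derivative_fun_upd_component refl | assumption)+
    (simp only: coordinate_derivative_simps,
     simp add: sum.distrib sum_subtractf sum_if_const sum_if_Suc_le cong: if_cong,
     (simp add: algebra_simps sum.distrib sum_subtractf sum_negf sum_distrib_left)?)

lemma has_field_derivative_H10_pp:
  "j \<in> {1..n} \<Longrightarrow>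
    ((\<lambda>x. H10 n th1 ka rh Q P QQ (PP(j:=x))) has_field_derivative
      (\<Sum>k=j+1..n. Q j * P k * (QQ j - QQ k))) (at (PP j))"
  unfolding H10_def
  by (rule derivative_eq_intros has_field_derivative_fun_upd_component refl | assumption)+
    (simp only: coordinate_derivative_simps,
     simp add: sum.distrib sum_subtractf sum_if_const sum_if_Suc_le cong: if_cong,
     (simp add: algebra_simps sum.distrib sum_subtractf sum_negf sum_distrib_left)?)

section \<open>The Hamiltonian vector field on the constrained locus\<close>

locale constrained_phase_point =
  fixes n :: nat and th1 :: complex and ka rh :: "nat \<Rightarrow> complex"
    and Q P QQ PP :: "nat \<Rightarrow> complex"
  assumes PP_zero: "\<And>i. i \<in> {1..n} \<Longrightarrow> PP i = 0"
    and QP_constraint: "\<And>i. i \<in> {1..n} \<Longrightarrow> Q i * P i - ka i - rh i = 0"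
    and th1_constraint: "th1 + (\<Sum>i=1..n. ka i + rh i) = 0"
begin

lemma ka_eq: "i \<in> {1..n} \<Longrightarrow> ka i = Q i * P i - rh i"
  using QP_constraint[of i] by (simp add: algebra_simps)

lemma th1_eq: "th1 = - (\<Sum>i=1..n. ka i + rh i)"
  using th1_constraint by (simp add: eq_neg_iff_add_eq_0)

lemma constrained_sums:
  "(\<Sum>i=1..n. QQ i * (PP i - P i)) = - (\<Sum>i=1..n. QQ i * P i)"
  "(\<Sum>i=1..n. Q i * (P i - PP i)) = (\<Sum>i=1..n. ka i + rh i)"
  "(\<Sum>i=1..n. Q i * P i) = (\<Sum>i=1..n. ka i + rh i)"
  "(\<Sum>i=1..n. Q i * ((Q i - 1) * P i + QQ i * PP i - ka i - rh i)) = - (\<Sum>i=1..n. ka i + rh i)"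
  "(\<Sum>i=1..n. (Q i - 1) * P i + QQ i * PP i - ka i - rh i) = - (\<Sum>i=1..n. P i)"
  "(\<Sum>i=1..n. (Q i + QQ i - 1) * P i) =
     (\<Sum>i=1..n. ka i + rh i) + (\<Sum>i=1..n. QQ i * P i) - (\<Sum>i=1..n. P i)"
  "(\<Sum>i=1..n. QQ i * ((QQ i - 1) * PP i + Q i * P i - ka i - rh i)) = 0"
  "(\<Sum>i=1..n. (QQ i - 1) * PP i + Q i * P i - ka i - rh i) = 0"
  by (simp_all add: PP_zero ka_eq algebra_simps sum.distrib sum_subtractf sum_negf)

lemma constrained_partial_sums:
  assumes "j \<in> {1..n}"
  shows "(\<Sum>k=j+1..n. P k * ((Q j - Q k) * P j + (QQ j - QQ k) * PP j - ka j - rh j) + Q j * P k * P j)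
      = (ka j + rh j) * (\<Sum>k=j+1..n. P k) - P j * (\<Sum>k=j+1..n. ka k + rh k)"
    and "(\<Sum>i=1..j-1. Q i * P i * P j) = P j * (\<Sum>i=1..j-1. ka i + rh i)"
    and "(\<Sum>k=j+1..n. Q j * P k * (QQ j - QQ k)) =
      Q j * (QQ j * (\<Sum>k=j+1..n. P k) - (\<Sum>k=j+1..n. QQ k * P k))"
    and "(\<Sum>i=1..j-1. QQ i * ((QQ i - QQ j) * PP i + (Q i - Q j) * P i - ka i - rh i)) =
      - Q j * (\<Sum>i=1..j-1. QQ i * P i)"
  using assms
  by (simp_all add: PP_zero ka_eq le_diff_conv2 algebra_simps sum.distrib sum_subtractf sum_negf
      sum_distrib_left)

lemma dH_dq_H1:
  assumes j: "j \<in> {1..n}"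
  shows "dH_dq (H1 n th1 th2 th3 ka rh t1 t2) j Q P QQ PP =
      P j * (th2 - (\<Sum>i=1..n. QQ i * P i)) / (t1 - t2)
    + ((\<Sum>i=1..n. P i) + th3) * (P j - (ka j + rh j)) / (t1 - 1)
    + (P j * ((\<Sum>i=1..n. QQ i * P i) - (\<Sum>i=1..n. P i) + ka 0 + rh j)
       + (ka j + rh j) * (\<Sum>k=j+1..n. P k)) / t1"
  unfolding dH_dq_def H1_def
  by (rule DERIV_imp_deriv[OF DERIV_cong], (rule DERIV_add DERIV_cdivide
      has_field_derivative_H1t_q has_field_derivative_H11_q has_field_derivative_H10_q j)+)
    (simp only: constrained_sums constrained_partial_sums[OF j] th1_eq
       sum_split_at[OF j, of "\<lambda>i. ka i + rh i"],
     simp add: PP_zero[OF j] ka_eq[OF j] divide_inverse algebra_simps)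

lemma dH_dpp_H1:
  assumes j: "j \<in> {1..n}"
  shows "dH_dpp (H1 n th1 th2 th3 ka rh t1 t2) j Q P QQ PP =
      Q j * ((\<Sum>i=1..n. QQ i * P i) - th2) / (t1 - t2)
    - ((\<Sum>i=1..n. P i) + th3) * Q j * QQ j / (t1 - 1)
    + Q j * (QQ j * (\<Sum>k=j+1..n. P k) - (\<Sum>k=j+1..n. QQ k * P k)) / t1"
  unfolding dH_dpp_def H1_def
  by (rule DERIV_imp_deriv[OF DERIV_cong], (rule DERIV_add DERIV_cdivide
      has_field_derivative_H1t_pp has_field_derivative_H11_pp has_field_derivative_H10_pp j)+)
    (simp only: constrained_sums constrained_partial_sums[OF j] th1_eq,
     simp add: PP_zero[OF j] ka_eq[OF j] divide_inverse algebra_simps)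

lemma dH_dq_H2:
  assumes j: "j \<in> {1..n}"
  shows "dH_dq (H2 n th1 th2 th3 ka rh t1 t2) j Q P QQ PP =
      (th2 - (\<Sum>i=1..n. QQ i * P i)) * P j / (t2 - t1)
    - (th2 + th3 * QQ j) * P j / (t2 - 1)"
  unfolding dH_dq_def H2_def H1_def
  by (rule DERIV_imp_deriv[OF DERIV_cong], (rule DERIV_add DERIV_cdivide
      has_field_derivative_H1t_qq has_field_derivative_H11_qq has_field_derivative_H10_qq j)+)
    (insert j, simp only: constrained_sums constrained_partial_sums[OF j] th1_eq,
     simp add: PP_zero ka_eq[OF j] le_diff_conv2 divide_inverse algebra_simps)

lemma dH_dpp_H2:
  assumes j: "j \<in> {1..n}"
  shows "dH_dpp (H2 n th1 th2 th3 ka rh t1 t2) j Q P QQ PP =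
      Q j * ((\<Sum>i=1..n. QQ i * P i) - th2) / (t2 - t1)
    - (QQ j - 1) * (th2 + th3 * QQ j) / (t2 - 1)
    + (QQ j * (ka 0 - ka j) + (QQ j + Q j - 1) * th2 - Q j * (\<Sum>i=1..j-1. QQ i * P i)) / t2"
  unfolding dH_dpp_def H2_def H1_def
  by (rule DERIV_imp_deriv[OF DERIV_cong], (rule DERIV_add DERIV_cdivide
      has_field_derivative_H1t_p has_field_derivative_H11_p has_field_derivative_H10_p j)+)
    (insert j, simp only: constrained_sums constrained_partial_sums[OF j] th1_eq,
     simp add: PP_zero ka_eq[OF j] le_diff_conv2 divide_inverse algebra_simps)

end

section \<open>Rows of the coefficient matrices\<close>

lemma sum_E_mult: "(\<Sum>l=0..m. E a b k l * f l) = (if k = a \<and> b \<le> m then f b else 0)"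
  unfolding E_def by (cases "k = a") (auto simp: if_zero_simps)

lemma row_action_simps:
  fixes f :: "nat \<Rightarrow> complex"
  shows "(\<Sum>l\<in>L. (X l + Y l) * f l) = (\<Sum>l\<in>L. X l * f l) + (\<Sum>l\<in>L. Y l * f l)"
    and "(\<Sum>l\<in>L. (X l - Y l) * f l) = (\<Sum>l\<in>L. X l * f l) - (\<Sum>l\<in>L. Y l * f l)"
    and "(\<Sum>l\<in>L. (c * X l) * f l) = c * (\<Sum>l\<in>L. X l * f l)"
    and "(\<Sum>l\<in>L. (- X l) * f l) = - (\<Sum>l\<in>L. X l * f l)"
    and "(\<Sum>l\<in>L. (\<Sum>j\<in>J. Z j l) * f l) = (\<Sum>j\<in>J. \<Sum>l\<in>L. Z j l * f l)"
  by (auto simp: sum.distrib sum_subtractf sum_distrib_left sum_distrib_right sum_negf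
      algebra_simps intro: sum.swap)

lemma A11_rows:
  shows "(\<Sum>l=0..2*n. A11 n th3 ka rh 0 l * f l) = th3 * f 0 + (\<Sum>j=1..n. f j)"
    and "i \<in> {1..n} \<Longrightarrow>
      (\<Sum>l=0..2*n. A11 n th3 ka rh i l * f l) = (ka i + rh i) * (th3 * f 0 + (\<Sum>j=1..n. f j))"
    and "i \<in> {1..n} \<Longrightarrow> (\<Sum>l=0..2*n. A11 n th3 ka rh (n+i) l * f l) = 0"
  unfolding A11_def
  by (simp_all only: row_action_simps sum_E_mult)
    (auto simp: if_zero_simps if_conj_zero sum_if_const sum.distrib sum_distrib_left cong: if_cong,
     (simp_all add: sum.distrib sum_distrib_left le_diff_conv2 algebra_simps)?)

lemma A01_rows:
  shows "(\<Sum>l=0..2*n. A01 n ka rh 0 l * f l) =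
      (ka 0 + rh 1) * f 0 - (\<Sum>j=1..n. f j) - (\<Sum>j=1..n. f (n+j))"
    and "i \<in> {1..n} \<Longrightarrow> (\<Sum>l=0..2*n. A01 n ka rh i l * f l) =
      (rh 1 - rh i) * f i - (ka i + rh i) * (\<Sum>j=i+1..n. f j)"
    and "i \<in> {1..n} \<Longrightarrow> (\<Sum>l=0..2*n. A01 n ka rh (n+i) l * f l) =
      (rh 1 - rh i) * f (n+i) - (ka i + rh i) * (\<Sum>j=i+1..n. f (n+j))"
  unfolding A01_def
  by (simp_all only: row_action_simps sum_E_mult)
    (auto simp: if_zero_simps if_conj_zero sum_if_const sum.distrib sum_distrib_left cong: if_cong,
     (simp_all add: sum.distrib sum_distrib_left le_diff_conv2 algebra_simps)?)

lemma At_rows: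
  shows "(\<Sum>l=0..2*n. At n th2 ka rh 0 l * f l) = th2 * f 0 + (\<Sum>j=1..n. f (n+j))"
    and "i \<in> {1..n} \<Longrightarrow> (\<Sum>l=0..2*n. At n th2 ka rh i l * f l) = 0"
    and "i \<in> {1..n} \<Longrightarrow> (\<Sum>l=0..2*n. At n th2 ka rh (n+i) l * f l) =
      (ka i + rh i) * (th2 * f 0 + (\<Sum>j=1..n. f (n+j)))"
  unfolding At_def
  by (simp_all only: row_action_simps sum_E_mult)
    (auto simp: if_zero_simps if_conj_zero sum_if_const sum.distrib sum_distrib_left cong: if_cong,
     (simp_all add: sum.distrib sum_distrib_left le_diff_conv2 algebra_simps)?)

lemma A12_rows:
  shows "(\<Sum>l=0..2*n. A12 n th2 th3 0 l * f l) = 0"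
    and "i \<in> {1..n} \<Longrightarrow> (\<Sum>l=0..2*n. A12 n th2 th3 i l * f l) = th2 * f i - th3 * f (n+i)"
    and "i \<in> {1..n} \<Longrightarrow> (\<Sum>l=0..2*n. A12 n th2 th3 (n+i) l * f l) =
      - th2 * f i + th3 * f (n+i)"
  unfolding A12_def
  by (simp_all only: row_action_simps sum_E_mult)
    (auto simp: if_zero_simps if_conj_zero sum_if_const sum.distrib sum_distrib_left cong: if_cong,
     (simp_all add: sum.distrib sum_distrib_left le_diff_conv2 algebra_simps)?)

lemma A02_rows:
  shows "(\<Sum>l=0..2*n. A02 n th2 ka rh 0 l * f l) = 0"
    and "i \<in> {1..n} \<Longrightarrow> (\<Sum>l=0..2*n. A02 n th2 ka rh i l * f l) = 0"
    and "i \<in> {1..n} \<Longrightarrow> (\<Sum>l=0..2*n. A02 n th2 ka rh (n+i) l * f l) =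
      - th2 * (ka i + rh i) * f 0 + th2 * f i - (ka i + rh i) * (\<Sum>j=1..i-1. f (n+j))
      + (th2 + ka 0 - ka i) * f (n+i)"
  unfolding A02_def
  by (simp_all only: row_action_simps sum_E_mult)
    (auto simp: if_zero_simps if_conj_zero sum_if_const sum.distrib sum_distrib_left cong: if_cong,
     (simp_all add: sum.distrib sum_distrib_left le_diff_conv2 algebra_simps)?)

section \<open>The Pfaff system\<close>

definition connection_t1 :: "nat \<Rightarrow> complex \<Rightarrow> complex \<Rightarrow> (nat \<Rightarrow> complex) \<Rightarrow> (nat \<Rightarrow> complex)
    \<Rightarrow> complex \<Rightarrow> complex \<Rightarrow> nat \<Rightarrow> nat \<Rightarrow> complex" where
  "connection_t1 n th2 th3 ka rh t1 t2 k l =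
     A11 n th3 ka rh k l / (t1 - 1) + A01 n ka rh k l / t1 + At n th2 ka rh k l / (t1 - t2)"

definition connection_t2 :: "nat \<Rightarrow> complex \<Rightarrow> complex \<Rightarrow> (nat \<Rightarrow> complex) \<Rightarrow> (nat \<Rightarrow> complex)
    \<Rightarrow> complex \<Rightarrow> complex \<Rightarrow> nat \<Rightarrow> nat \<Rightarrow> complex" where
  "connection_t2 n th2 th3 ka rh t1 t2 k l =
     - At n th2 ka rh k l / (t1 - t2) + A12 n th2 th3 k l / (t2 - 1) + A02 n th2 ka rh k l / t2"

lemma sum_connection_t1:
  "(\<Sum>l\<in>L. connection_t1 n th2 th3 ka rh t1 t2 k l * f l) =
     (\<Sum>l\<in>L. A11 n th3 ka rh k l * f l) / (t1 - 1) + (\<Sum>l\<in>L. A01 n ka rh k l * f l) / t1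
   + (\<Sum>l\<in>L. At n th2 ka rh k l * f l) / (t1 - t2)"
  by (simp add: connection_t1_def distrib_right sum.distrib sum_divide_distrib)

lemma sum_connection_t2:
  "(\<Sum>l\<in>L. connection_t2 n th2 th3 ka rh t1 t2 k l * f l) =
     - (\<Sum>l\<in>L. At n th2 ka rh k l * f l) / (t1 - t2) + (\<Sum>l\<in>L. A12 n th2 th3 k l * f l) / (t2 - 1)
   + (\<Sum>l\<in>L. A02 n th2 ka rh k l * f l) / t2"
  by (simp add: connection_t2_def ring_distribs sum.distrib sum_subtractf sum_divide_distrib sum_negf)

definition pfaff_vector :: "nat \<Rightarrow> complex \<Rightarrow> (nat \<Rightarrow> complex) \<Rightarrow> (nat \<Rightarrow> complex) \<Rightarrow> nat \<Rightarrow> complex" where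
  "pfaff_vector n W P QQ k =
     (if k = 0 then W else if k \<le> n then P k * W else - QQ (k - n) * P (k - n) * W)"

lemma pfaff_vector_simps:
  shows "pfaff_vector n W P QQ 0 = W"
    and "j \<in> {1..n} \<Longrightarrow> pfaff_vector n W P QQ j = P j * W"
    and "j \<in> {1..n} \<Longrightarrow> pfaff_vector n W P QQ (n + j) = - QQ j * P j * W"
  by (simp_all add: pfaff_vector_def)

lemma sum_pfaff_vector:
  assumes "A \<subseteq> {1..n}"
  shows "(\<Sum>j\<in>A. pfaff_vector n W P QQ j) = (\<Sum>j\<in>A. P j) * W"
    and "(\<Sum>j\<in>A. pfaff_vector n W P QQ (n + j)) = - (\<Sum>j\<in>A. QQ j * P j) * W"
  using assms
  by (auto simp: pfaff_vector_simps sum_distrib_right sum_negf[symmetric] subset_iff intro!: sum.cong)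

definition log_deriv_w0_t1 :: "nat \<Rightarrow> complex \<Rightarrow> complex \<Rightarrow> (nat \<Rightarrow> complex) \<Rightarrow> (nat \<Rightarrow> complex)
    \<Rightarrow> complex \<Rightarrow> complex \<Rightarrow> (nat \<Rightarrow> complex) \<Rightarrow> (nat \<Rightarrow> complex) \<Rightarrow> complex" where
  "log_deriv_w0_t1 n th2 th3 ka rh t1 t2 P QQ =
     ((\<Sum>j=1..n. P j) + th3) / (t1 - 1)
   + ((\<Sum>j=1..n. (QQ j - 1) * P j) + ka 0 + rh 1) / t1
   + (- (\<Sum>j=1..n. QQ j * P j) + th2) / (t1 - t2)"

definition log_deriv_w0_t2 :: "nat \<Rightarrow> complex \<Rightarrow> complex \<Rightarrow> complex \<Rightarrow> (nat \<Rightarrow> complex)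
    \<Rightarrow> (nat \<Rightarrow> complex) \<Rightarrow> complex" where
  "log_deriv_w0_t2 n th2 t1 t2 P QQ = - ((- (\<Sum>j=1..n. QQ j * P j) + th2) / (t1 - t2))"

lemma has_pderiv_pfaff_row_0:
  assumes g1: "has_pderiv g 1 (g z * log_deriv_w0_t1 n th2 th3 ka rh t1 t2 P QQ) z"
    and g2: "has_pderiv g 2 (g z * log_deriv_w0_t2 n th2 t1 t2 P QQ) z"
  shows "has_pderiv g 1
      (\<Sum>l=0..2*n. connection_t1 n th2 th3 ka rh t1 t2 0 l * pfaff_vector n (g z) P QQ l) z
    \<and> has_pderiv g 2
      (\<Sum>l=0..2*n. connection_t2 n th2 th3 ka rh t1 t2 0 l * pfaff_vector n (g z) P QQ l) z"
proof
  have "{1..n} \<subseteq> {1..n}" by simp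
  note vector = pfaff_vector_simps(1) sum_pfaff_vector[OF this]
  show "has_pderiv g 1
      (\<Sum>l=0..2*n. connection_t1 n th2 th3 ka rh t1 t2 0 l * pfaff_vector n (g z) P QQ l) z"
    by (rule has_pderiv_cong[OF g1])
      (simp only: sum_connection_t1 A11_rows(1) A01_rows(1) At_rows(1) vector,
       simp add: log_deriv_w0_t1_def sum_subtractf divide_inverse algebra_simps)
  show "has_pderiv g 2
      (\<Sum>l=0..2*n. connection_t2 n th2 th3 ka rh t1 t2 0 l * pfaff_vector n (g z) P QQ l) z"
    by (rule has_pderiv_cong[OF g2])
      (simp only: sum_connection_t2 A12_rows(1) A02_rows(1) At_rows(1) vector,
       simp add: log_deriv_w0_t2_def divide_inverse algebra_simps)
qed

lemma pfaff_index_cases: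
  fixes k n :: nat
  assumes "k \<in> {0..2*n}"
  obtains "k = 0" | j where "j \<in> {1..n}" "k = j" | j where "j \<in> {1..n}" "k = n + j"
proof (cases "k = 0")
  case False
  then show ?thesis
    using assms that(2)[of k] that(3)[of "k - n"] by (cases "k \<le> n") auto
qed (rule that(1))

context constrained_phase_point
begin

lemma has_pderiv_pfaff_row_p:
  assumes j: "j \<in> {1..n}"
    and f1: "has_pderiv f 1 (- dH_dq (H1 n th1 th2 th3 ka rh t1 t2) j Q P QQ PP) z"
    and f2: "has_pderiv f 2 (- dH_dq (H2 n th1 th2 th3 ka rh t1 t2) j Q P QQ PP) z"
    and f: "f z = P j"
    and g1: "has_pderiv g 1 (g z * log_deriv_w0_t1 n th2 th3 ka rh t1 t2 P QQ) z"
    and g2: "has_pderiv g 2 (g z * log_deriv_w0_t2 n th2 t1 t2 P QQ) z"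
  shows "has_pderiv (\<lambda>z. f z * g z) 1
      (\<Sum>l=0..2*n. connection_t1 n th2 th3 ka rh t1 t2 j l * pfaff_vector n (g z) P QQ l) z
    \<and> has_pderiv (\<lambda>z. f z * g z) 2
      (\<Sum>l=0..2*n. connection_t2 n th2 th3 ka rh t1 t2 j l * pfaff_vector n (g z) P QQ l) z"
proof
  have "{1..n} \<subseteq> {1..n}" "{j+1..n} \<subseteq> {1..n}"
    using j by auto
  note vector = pfaff_vector_simps(1) pfaff_vector_simps(2,3)[OF j]
    sum_pfaff_vector[OF this(1)] sum_pfaff_vector[OF this(2)]
  show "has_pderiv (\<lambda>z. f z * g z) 1
      (\<Sum>l=0..2*n. connection_t1 n th2 th3 ka rh t1 t2 j l * pfaff_vector n (g z) P QQ l) z"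
    by (rule has_pderiv_cong[OF has_pderiv_mult[OF f1 g1]])
      (simp only: sum_connection_t1 A11_rows(2)[OF j] A01_rows(2)[OF j] At_rows(2)[OF j] vector
        dH_dq_H1[OF j] f,
       simp add: log_deriv_w0_t1_def sum_subtractf divide_inverse algebra_simps)
  show "has_pderiv (\<lambda>z. f z * g z) 2
      (\<Sum>l=0..2*n. connection_t2 n th2 th3 ka rh t1 t2 j l * pfaff_vector n (g z) P QQ l) z"
    by (rule has_pderiv_cong[OF has_pderiv_mult[OF f2 g2]])
      (simp only: sum_connection_t2 A12_rows(2)[OF j] A02_rows(2)[OF j] At_rows(2)[OF j] vector
        dH_dq_H2[OF j] f,
       simp add: log_deriv_w0_t2_def inverse_minus_eq[of "t1 - t2", unfolded minus_diff_eq]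
         divide_inverse algebra_simps)
qed

lemma has_pderiv_pfaff_row_qp:
  assumes j: "j \<in> {1..n}"
    and f1: "has_pderiv f 1 (- dH_dq (H1 n th1 th2 th3 ka rh t1 t2) j Q P QQ PP) z"
    and f2: "has_pderiv f 2 (- dH_dq (H2 n th1 th2 th3 ka rh t1 t2) j Q P QQ PP) z"
    and f: "f z = P j"
    and h1: "has_pderiv h 1 (dH_dpp (H1 n th1 th2 th3 ka rh t1 t2) j Q P QQ PP) z"
    and h2: "has_pderiv h 2 (dH_dpp (H2 n th1 th2 th3 ka rh t1 t2) j Q P QQ PP) z"
    and h: "h z = QQ j"
    and g1: "has_pderiv g 1 (g z * log_deriv_w0_t1 n th2 th3 ka rh t1 t2 P QQ) z"
    and g2: "has_pderiv g 2 (g z * log_deriv_w0_t2 n th2 t1 t2 P QQ) z"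
  shows "has_pderiv (\<lambda>z. - h z * f z * g z) 1
      (\<Sum>l=0..2*n. connection_t1 n th2 th3 ka rh t1 t2 (n+j) l * pfaff_vector n (g z) P QQ l) z
    \<and> has_pderiv (\<lambda>z. - h z * f z * g z) 2
      (\<Sum>l=0..2*n. connection_t2 n th2 th3 ka rh t1 t2 (n+j) l * pfaff_vector n (g z) P QQ l) z"
proof
  have "{1..n} \<subseteq> {1..n}" "{j+1..n} \<subseteq> {1..n}" "{1..j-1} \<subseteq> {1..n}"
    using j by auto
  note vector = pfaff_vector_simps(1) pfaff_vector_simps(2,3)[OF j]
    sum_pfaff_vector[OF this(1)] sum_pfaff_vector[OF this(2)] sum_pfaff_vector[OF this(3)]
  show "has_pderiv (\<lambda>z. - h z * f z * g z) 1
      (\<Sum>l=0..2*n. connection_t1 n th2 th3 ka rh t1 t2 (n+j) l * pfaff_vector n (g z) P QQ l) z"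
    by (rule has_pderiv_cong[OF has_pderiv_mult[OF has_pderiv_mult[OF has_pderiv_minus[OF h1] f1] g1]])
      (simp only: sum_connection_t1 A11_rows(3)[OF j] A01_rows(3)[OF j] At_rows(3)[OF j] vector
        dH_dq_H1[OF j] dH_dpp_H1[OF j] f h,
       simp add: log_deriv_w0_t1_def ka_eq[OF j] sum_subtractf divide_inverse algebra_simps)
  show "has_pderiv (\<lambda>z. - h z * f z * g z) 2
      (\<Sum>l=0..2*n. connection_t2 n th2 th3 ka rh t1 t2 (n+j) l * pfaff_vector n (g z) P QQ l) z"
    by (rule has_pderiv_cong[OF has_pderiv_mult[OF has_pderiv_mult[OF has_pderiv_minus[OF h2] f2] g2]])
      (simp only: sum_connection_t2 A12_rows(3)[OF j] A02_rows(3)[OF j] At_rows(3)[OF j] vector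
        dH_dq_H2[OF j] dH_dpp_H2[OF j] f h,
       simp add: log_deriv_w0_t2_def ka_eq[OF j] inverse_minus_eq[of "t1 - t2", unfolded minus_diff_eq]
         divide_inverse algebra_simps)
qed

lemma has_pderiv_pfaff_system:
  assumes k: "k \<in> {0..2*n}"
    and flow: "\<And>j. j \<in> {1..n} \<Longrightarrow>
        has_pderiv (p j) 1 (- dH_dq (H1 n th1 th2 th3 ka rh t1 t2) j Q P QQ PP) z
      \<and> has_pderiv (p j) 2 (- dH_dq (H2 n th1 th2 th3 ka rh t1 t2) j Q P QQ PP) z
      \<and> has_pderiv (qq j) 1 (dH_dpp (H1 n th1 th2 th3 ka rh t1 t2) j Q P QQ PP) z
      \<and> has_pderiv (qq j) 2 (dH_dpp (H2 n th1 th2 th3 ka rh t1 t2) j Q P QQ PP) z"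
    and p: "\<And>j. p j z = P j" and qq: "\<And>j. qq j z = QQ j"
    and g1: "has_pderiv g 1 (g z * log_deriv_w0_t1 n th2 th3 ka rh t1 t2 P QQ) z"
    and g2: "has_pderiv g 2 (g z * log_deriv_w0_t2 n th2 t1 t2 P QQ) z"
    and w: "\<And>k z. w k z = pfaff_vector n (g z) (\<lambda>j. p j z) (\<lambda>j. qq j z) k"
  shows "has_pderiv (w k) 1 (\<Sum>l=0..2*n. connection_t1 n th2 th3 ka rh t1 t2 k l * w l z) z
    \<and> has_pderiv (w k) 2 (\<Sum>l=0..2*n. connection_t2 n th2 th3 ka rh t1 t2 k l * w l z) z"
proof -
  have w_at: "w l z = pfaff_vector n (g z) P QQ l" for l
    by (simp add: w p qq)
  from k show ?thesis
  proof (cases rule: pfaff_index_cases)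
    case 1
    have w_0: "w 0 = g"
      by (simp add: w pfaff_vector_def fun_eq_iff)
    show ?thesis
      unfolding 1 w_at w_0 by (rule has_pderiv_pfaff_row_0[OF g1 g2])
  next
    case (2 j)
    have w_j: "w j = (\<lambda>z. p j z * g z)"
      using 2(1) by (simp add: w pfaff_vector_def fun_eq_iff)
    show ?thesis
      unfolding 2(2) w_at w_j using flow[OF 2(1)]
      by (intro has_pderiv_pfaff_row_p[where f = "p j", OF 2(1) _ _ p[of j] g1 g2]) auto
  next
    case (3 j)
    have w_nj: "w (n + j) = (\<lambda>z. - qq j z * p j z * g z)"
      using 3(1) by (simp add: w pfaff_vector_def fun_eq_iff)
    show ?thesis
      unfolding 3(2) w_at w_nj using flow[OF 3(1)]
      by (intro has_pderiv_pfaff_row_qp[where f = "p j" and h = "qq j",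
            OF 3(1) _ _ p[of j] _ _ qq[of j] g1 g2]) auto
  qed
qed

end

theorem theorem3p2:
  fixes n :: nat
    and th1 th2 th3 :: complex
    and ka rh :: "nat \<Rightarrow> complex"
    and U :: "(complex \<times> complex) set"
    and q p qq pp :: "nat \<Rightarrow> complex \<times> complex \<Rightarrow> complex"
    and w0 :: "complex \<times> complex \<Rightarrow> complex"
    and w :: "nat \<Rightarrow> complex \<times> complex \<Rightarrow> complex"
  assumes n: "n \<ge> 1"
    and U_open: "open U"
    and U_sing: "\<And>t1 t2. (t1, t2) \<in> U \<Longrightarrow>
                   t1 \<noteq> 0 \<and> t1 \<noteq> 1 \<and> t2 \<noteq> 0 \<and> t2 \<noteq> 1 \<and> t1 \<noteq> t2"
    and ham: "\<And>i j t1 t2. i \<in> {1, 2} \<Longrightarrow> j \<in> {1..n} \<Longrightarrow> (t1, t2) \<in> U \<Longrightarrow>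
       let Hi = Ham i n th1 th2 th3 ka rh t1 t2;
           Q = (\<lambda>k. q k (t1, t2)); P = (\<lambda>k. p k (t1, t2));
           QQ = (\<lambda>k. qq k (t1, t2)); PP = (\<lambda>k. pp k (t1, t2))
       in has_pderiv (q j) i (dH_dp Hi j Q P QQ PP) (t1, t2)
        \<and> has_pderiv (p j) i (- dH_dq Hi j Q P QQ PP) (t1, t2)
        \<and> has_pderiv (qq j) i (dH_dpp Hi j Q P QQ PP) (t1, t2)
        \<and> has_pderiv (pp j) i (- dH_dqq Hi j Q P QQ PP) (t1, t2)"
    and constr1: "\<And>i z. i \<in> {1..n} \<Longrightarrow> z \<in> U \<Longrightarrow> q i z * p i z - ka i - rh i = 0"
    and constr2: "\<And>i z. i \<in> {1..n} \<Longrightarrow> z \<in> U \<Longrightarrow> pp i z = 0"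
    and constr3: "th1 + (\<Sum>j=1..n. ka j + rh j) = 0"
    and w0_nz: "\<And>z. z \<in> U \<Longrightarrow> w0 z \<noteq> 0"
    and w0_d1: "\<And>t1 t2. (t1, t2) \<in> U \<Longrightarrow> has_pderiv w0 1
       (w0 (t1, t2) * (((\<Sum>j=1..n. p j (t1, t2)) + th3) / (t1 - 1)
          + ((\<Sum>j=1..n. (qq j (t1, t2) - 1) * p j (t1, t2)) + ka 0 + rh 1) / t1
          + (- (\<Sum>j=1..n. qq j (t1, t2) * p j (t1, t2)) + th2) / (t1 - t2))) (t1, t2)"
    and w0_d2: "\<And>t1 t2. (t1, t2) \<in> U \<Longrightarrow> has_pderiv w0 2
       (w0 (t1, t2) * (- ((- (\<Sum>j=1..n. qq j (t1, t2) * p j (t1, t2)) + th2) / (t1 - t2)))) (t1, t2)"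
    and w_def: "\<And>k z. w k z = (if k = 0 then w0 z
                          else if k \<le> n then p k z * w0 z
                          else - qq (k - n) z * p (k - n) z * w0 z)"
  shows "\<forall>t1 t2 k. (t1, t2) \<in> U \<longrightarrow> k \<in> {0..2*n} \<longrightarrow>
      has_pderiv (w k) 1
        (\<Sum>l=0..2*n. (A11 n th3 ka rh k l / (t1 - 1) + A01 n ka rh k l / t1
                      + At n th2 ka rh k l / (t1 - t2)) * w l (t1, t2)) (t1, t2)
    \<and> has_pderiv (w k) 2
        (\<Sum>l=0..2*n. (- At n th2 ka rh k l / (t1 - t2) + A12 n th2 th3 k l / (t2 - 1)
                      + A02 n th2 ka rh k l / t2) * w l (t1, t2)) (t1, t2)"
  apply (intro allI impI)
  subgoal premises point for t1 t2 k
  proof -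
    interpret constrained_phase_point n th1 ka rh "\<lambda>i. q i (t1, t2)" "\<lambda>i. p i (t1, t2)"
        "\<lambda>i. qq i (t1, t2)" "\<lambda>i. pp i (t1, t2)"
      using constr1 constr2 constr3 point(1) by unfold_locales auto
    show ?thesis
      using ham[of 1 _ t1 t2] ham[of 2 _ t1 t2] point(1) w0_d1[OF point(1)] w0_d2[OF point(1)]
      by (intro has_pderiv_pfaff_system[where p = p and qq = qq and g = w0, OF point(2),
            unfolded connection_t1_def connection_t2_def])
        (auto simp: Let_def Ham_def log_deriv_w0_t1_def log_deriv_w0_t2_def w_def pfaff_vector_def)
  qed
  done

end
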